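(* Fix any $\alpha>1$. Consider Algorithm MWHVC (described in the context) run on a hypergraph $G=(V,E)$ of rank $f$ and maximum degree $\Delta$ with nonnegative vertex weights $w$, with parameters $\varepsilon\in(0,1]$, $\beta=\varepsilon/(f+\varepsilon)$ and multiplier $\alpha$. The number of iterations of the algorithm is $O\left(\log_\alpha\Delta + f\cdot\frac{\alpha}{\beta}\right)$.
   Context: Let $G=(V,E)$ be a hypergraph: each hyperedge is a nonempty subset of $V$ of size at most $f$ (rank $f$). Vertices have nonnegative weights $w(v)$. For $v\in V$, $E(v)=\{e\in E: v\in e\}$; $\Delta=\max_v |E(v)|\ge 3$. A hyperedge $e$ is covered by $C\subseteq V$ if $e\cap C\neq\emptyset$. The computation is distributed in synchronous rounds on the bipartite network with node set $V\cup E$ and a link between $v$ and $e$ iff $v\in e$. Parameters: $\varepsilon\in(0,1]$, $\beta=\varepsilon/(f+\varepsilon)$, and a multiplier $\alpha>1$. Algorithm MWHVC: Initialize $C\gets\emptyset$ and $E'(v)\gets E(v)$ for every $v$. Iteration $0$: every hyperedge $e$ sets $\mathrm{deal}_0(e)=\beta\cdot\min_{v\in e} w(v)/|E(v)|$ and $\delta_0(e)=\mathrm{deal}_0(e)$. For $i=1,2,\dots$: (a) every vertex $v\notin C$ (not terminated) checks whether $\sum_{e\in E(v)}\delta_{i-1}(e)\ge(1-\beta)w(v)$; if so, $v$ joins $C$, tells every $e\in E'(v)$ that $e$ is covered, and terminates. (b) Every uncovered hyperedge that receives such a message becomes covered, informs all its vertices, and terminates. (c) Every vertex $v\notin C$ that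 is told $e$ is covered sets $E'(v)\gets E'(v)\setminus\{e\}$; if $E'(v)=\emptyset$, $v$ terminates without joining $C$. (d) Every vertex $v\notin C$ sends "raise" to all $e\in E'(v)$ if $\sum_{e\in E'(v)}\mathrm{deal}_{i-1}(e)\le(\beta/\alpha)w(v)$, and otherwise sends "stuck" to all $e\in E'(v)$. (e) Every uncovered hyperedge $e$ sets $\mathrm{deal}_i(e)=\mathrm{deal}_{i-1}(e)$ if it received some "stuck" message, and $\mathrm{deal}_i(e)=\alpha\cdot\mathrm{deal}_{i-1}(e)$ otherwise, and $\delta_i(e)=\delta_{i-1}(e)+\mathrm{deal}_i(e)$. A vertex terminates when it is in $C$ or all its hyperedges are covered; a hyperedge terminates when covered. The number of iterations is the number of iterations until all nodes have terminated. *)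

theory Defs
  imports Main "HOL.Transcendental"
begin

definition Einc :: "'v set set \<Rightarrow> 'v \<Rightarrow> 'v set set" where
  "Einc E v = {e \<in> E. v \<in> e}"

definition Delta :: "'v set \<Rightarrow> 'v set set \<Rightarrow> nat" where
  "Delta V E = Max ((\<lambda>v. card (Einc E v)) ` V)"

text \<open>State of Algorithm MWHVC after an iteration.
  inC: the cover C; cov: covered hyperedges; Ep: E'(v); trm: terminated vertices;
  deal, dlt: deal_i(e) and delta_i(e).\<close>

record 'v mw_state =
  inC  :: "'v set"
  cov  :: "'v set set"
  Ep   :: "'v \<Rightarrow> 'v set set"
  trm  :: "'v set"
  deal :: "'v set \<Rightarrow> real"
  dlt  :: "'v set \<Rightarrow> real"

text \<open>Iteration 0.  Vertices without hyperedges are terminated from the start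
  (all their hyperedges are covered, vacuously).\<close>

definition mw_init :: "'v set \<Rightarrow> 'v set set \<Rightarrow> ('v \<Rightarrow> real) \<Rightarrow> real \<Rightarrow> 'v mw_state" where
  "mw_init V E w \<beta> =
     (let d = (\<lambda>e. \<beta> * Min ((\<lambda>v. w v / real (card (Einc E v))) ` e)) in
     \<lparr> inC = {}, cov = {}, Ep = Einc E, trm = {v \<in> V. Einc E v = {}},
       deal = d, dlt = d \<rparr>)"

definition mw_step :: "'v set \<Rightarrow> 'v set set \<Rightarrow> ('v \<Rightarrow> real) \<Rightarrow> real \<Rightarrow> real
    \<Rightarrow> 'v mw_state \<Rightarrow> 'v mw_state" where
  "mw_step V E w \<beta> \<alpha> s =
    (let
       \<comment> \<open>(a) non-terminated vertices whose dual sum is large join C\<close>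
       J = {v \<in> V. v \<notin> trm s \<and> (\<Sum>e\<in>Einc E v. dlt s e) \<ge> (1 - \<beta>) * w v};
       C' = inC s \<union> J;
       \<comment> \<open>(b) hyperedges told by a joining vertex become covered\<close>
       NC = {e \<in> E. e \<notin> cov s \<and> (\<exists>v\<in>J. e \<in> Ep s v)};
       Cov' = cov s \<union> NC;
       \<comment> \<open>(c) remaining vertices drop newly covered hyperedges; terminate if none left\<close>
       Ep' = (\<lambda>v. if v \<in> V \<and> v \<notin> trm s \<and> v \<notin> J then Ep s v - {e \<in> NC. v \<in> e} else Ep s v);
       T' = trm s \<union> J \<union> {v \<in> V. v \<notin> trm s \<and> v \<notin> J \<and> Ep' v = {}};
       \<comment> \<open>(d) remaining vertices send raise / stuck\<close>
       stuck = (\<lambda>v. (\<Sum>e\<in>Ep' v. deal s e) > (\<beta> / \<alpha>) * w v);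
       gotstuck = (\<lambda>e. \<exists>v \<in> V - T'. e \<in> Ep' v \<and> stuck v);
       \<comment> \<open>(e) uncovered hyperedges update deal and delta\<close>
       deal' = (\<lambda>e. if e \<in> E \<and> e \<notin> Cov' \<and> \<not> gotstuck e then \<alpha> * deal s e else deal s e);
       dlt' = (\<lambda>e. if e \<in> E \<and> e \<notin> Cov' then dlt s e + deal' e else dlt s e)
     in \<lparr> inC = C', cov = Cov', Ep = Ep', trm = T', deal = deal', dlt = dlt' \<rparr>)"

primrec mw_run :: "'v set \<Rightarrow> 'v set set \<Rightarrow> ('v \<Rightarrow> real) \<Rightarrow> real \<Rightarrow> real
    \<Rightarrow> nat \<Rightarrow> 'v mw_state" where
  "mw_run V E w \<beta> \<alpha> 0 = mw_init V E w \<beta>"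
| "mw_run V E w \<beta> \<alpha> (Suc i) = mw_step V E w \<beta> \<alpha> (mw_run V E w \<beta> \<alpha> i)"

definition mw_all_terminated :: "'v set \<Rightarrow> 'v set set \<Rightarrow> ('v \<Rightarrow> real) \<Rightarrow> real \<Rightarrow> real
    \<Rightarrow> nat \<Rightarrow> bool" where
  "mw_all_terminated V E w \<beta> \<alpha> i =
     (trm (mw_run V E w \<beta> \<alpha> i) = V \<and> cov (mw_run V E w \<beta> \<alpha> i) = E)"

definition mw_iterations :: "'v set \<Rightarrow> 'v set set \<Rightarrow> ('v \<Rightarrow> real) \<Rightarrow> real \<Rightarrow> real \<Rightarrow> nat" where
  "mw_iterations V E w \<beta> \<alpha> = (LEAST i. mw_all_terminated V E w \<beta> \<alpha> i)"

end

theory Submission imports Defs begin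

(* An uncovered hyperedge e either multiplies its deal by \<alpha> in an iteration or is held
   back by a vertex of e that reported "stuck".  The deal of e starts at
   \<beta> w(u) / |E(u)| for the minimising vertex u and never exceeds \<beta> w(u), so e raises at
   most log_\<alpha> \<Delta> times.  Each stuck report of a surviving vertex v adds at least
   (\<beta>/\<alpha>) w(v) to the dual sum of v, which stays below (1 - \<beta>) w(v) until v joins the
   cover, so v reports stuck at most \<alpha>/\<beta> times.  Hence a hyperedge still uncovered after
   n iterations has n \<le> log_\<alpha> \<Delta> + |e| \<alpha>/\<beta>, and once all hyperedges are covered every
   vertex has terminated. *)

locale mwhvc =
  fixes V :: "'v set" and E :: "'v set set" and w :: "'v \<Rightarrow> real" and \<beta> \<alpha> :: real
  assumes finite_V: "finite V" and finite_E: "finite E"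
    and edge_nonempty: "e \<in> E \<Longrightarrow> e \<noteq> {}"
    and edge_subset: "e \<in> E \<Longrightarrow> e \<subseteq> V"
    and weight_nonneg: "v \<in> V \<Longrightarrow> 0 \<le> w v"
    and beta_pos: "0 < \<beta>" and alpha_gt_1: "1 < \<alpha>"
begin

abbreviation run :: "nat \<Rightarrow> 'v mw_state" where
  "run n \<equiv> mw_run V E w \<beta> \<alpha> n"

(* The local bindings J, NC, E', T', the "stuck" message and the "received stuck" test
   of mw_step, as functions of the current state. *)

definition joins :: "'v mw_state \<Rightarrow> 'v set" where
  "joins s = {v \<in> V. v \<notin> trm s \<and> (\<Sum>e\<in>Einc E v. dlt s e) \<ge> (1 - \<beta>) * w v}"

definition newly_covered :: "'v mw_state \<Rightarrow> 'v set set" where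
  "newly_covered s = {e \<in> E. e \<notin> cov s \<and> (\<exists>v\<in>joins s. e \<in> Ep s v)}"

definition Ep_next :: "'v mw_state \<Rightarrow> 'v \<Rightarrow> 'v set set" where
  "Ep_next s v = (if v \<in> V \<and> v \<notin> trm s \<and> v \<notin> joins s
     then Ep s v - {e \<in> newly_covered s. v \<in> e} else Ep s v)"

definition trm_next :: "'v mw_state \<Rightarrow> 'v set" where
  "trm_next s = trm s \<union> joins s \<union> {v \<in> V. v \<notin> trm s \<and> v \<notin> joins s \<and> Ep_next s v = {}}"

definition stuck :: "'v mw_state \<Rightarrow> 'v \<Rightarrow> bool" where
  "stuck s v \<longleftrightarrow> (\<Sum>e\<in>Ep_next s v. deal s e) > (\<beta> / \<alpha>) * w v"

definition got_stuck :: "'v mw_state \<Rightarrow> 'v set \<Rightarrow> bool" where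
  "got_stuck s e \<longleftrightarrow> (\<exists>v \<in> V - trm_next s. e \<in> Ep_next s v \<and> stuck s v)"

lemma mw_step_simps:
  "cov (mw_step V E w \<beta> \<alpha> s) = cov s \<union> newly_covered s"
  "Ep (mw_step V E w \<beta> \<alpha> s) = Ep_next s"
  "trm (mw_step V E w \<beta> \<alpha> s) = trm_next s"
  "deal (mw_step V E w \<beta> \<alpha> s) = (\<lambda>e. if e \<in> E \<and> e \<notin> cov s \<union> newly_covered s \<and> \<not> got_stuck s e
     then \<alpha> * deal s e else deal s e)"
  "dlt (mw_step V E w \<beta> \<alpha> s) e = (if e \<in> E \<and> e \<notin> cov s \<union> newly_covered s
     then dlt s e + deal (mw_step V E w \<beta> \<alpha> s) e else dlt s e)"
  unfolding mw_step_def Let_def joins_def newly_covered_def Ep_next_def trm_next_def stuck_def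
    got_stuck_def
  by (simp_all only: mw_state.simps)

lemma mw_init_simps:
  "cov (mw_init V E w \<beta>) = {}"
  "Ep (mw_init V E w \<beta>) = Einc E"
  "trm (mw_init V E w \<beta>) = {v \<in> V. Einc E v = {}}"
  "deal (mw_init V E w \<beta>) = (\<lambda>e. \<beta> * Min ((\<lambda>v. w v / real (card (Einc E v))) ` e))"
  "dlt (mw_init V E w \<beta>) = deal (mw_init V E w \<beta>)"
  by (simp_all add: mw_init_def Let_def)

lemma finite_Einc: "finite (Einc E v)"
  using finite_E by (simp add: Einc_def)

lemma Einc_subset: "Einc E v \<subseteq> E"
  by (auto simp: Einc_def)

lemma finite_edge: "e \<in> E \<Longrightarrow> finite e"
  using edge_subset finite_V finite_subset by blast

lemma card_Einc_pos: "e \<in> E \<Longrightarrow> v \<in> e \<Longrightarrow> 0 < card (Einc E v)"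
  using finite_Einc[of v] by (auto simp: Einc_def card_gt_0_iff)

lemma card_Einc_le_Delta: "v \<in> V \<Longrightarrow> card (Einc E v) \<le> Delta V E"
  unfolding Delta_def using finite_V by (intro Max_ge) auto

lemma deal_init_nonneg:
  assumes "e \<in> E" shows "0 \<le> deal (run 0) e"
proof -
  have "0 \<le> Min ((\<lambda>v. w v / real (card (Einc E v))) ` e)"
    using assms finite_edge edge_nonempty edge_subset
    by (subst Min_ge_iff) (auto intro!: divide_nonneg_nonneg weight_nonneg)
  then show ?thesis using beta_pos by (simp add: mw_init_simps)
qed

lemma deal_dlt_nonneg: "e \<in> E \<Longrightarrow> 0 \<le> deal (run n) e \<and> 0 \<le> dlt (run n) e"
proof (induction n)
  case 0 then show ?case using deal_init_nonneg by (simp add: mw_init_simps)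
next
  case (Suc n) then show ?case using alpha_gt_1 by (simp add: mw_step_simps)
qed

lemma trm_subset_V: "trm (run n) \<subseteq> V"
  by (induction n) (auto simp: mw_init_simps mw_step_simps trm_next_def joins_def)

lemma cov_subset_E: "cov (run n) \<subseteq> E"
  by (induction n) (auto simp: mw_init_simps mw_step_simps newly_covered_def)

lemma cov_mono: "m \<le> n \<Longrightarrow> cov (run m) \<subseteq> cov (run n)"
  by (rule lift_Suc_mono_le[of "\<lambda>n. cov (run n)"]) (auto simp: mw_step_simps)

lemma Ep_active:
  "v \<in> V \<Longrightarrow> v \<notin> trm (run n) \<Longrightarrow> Ep (run n) v = {e \<in> Einc E v. e \<notin> cov (run n)}"
proof (induction n)
  case 0 then show ?case by (simp add: mw_init_simps)
next
  case (Suc n)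
  then have "v \<notin> trm (run n)" "v \<notin> joins (run n)"
    by (auto simp: mw_step_simps trm_next_def)
  with Suc show ?case by (auto simp: mw_step_simps Ep_next_def Einc_def)
qed

lemma Ep_active_nonempty:
  assumes "v \<in> V" "v \<notin> trm (run n)" shows "Ep (run n) v \<noteq> {}"
proof (cases n)
  case 0 then show ?thesis using assms by (simp add: mw_init_simps)
next
  case (Suc m) then show ?thesis using assms by (auto simp: mw_step_simps trm_next_def)
qed

lemma uncovered_edge_vertex_active:
  "e \<in> E \<Longrightarrow> e \<notin> cov (run n) \<Longrightarrow> v \<in> e \<Longrightarrow> v \<notin> trm (run n)"
proof (induction n)
  case 0 then show ?case by (auto simp: mw_init_simps Einc_def)
next
  case (Suc n)
  then have uncov: "e \<notin> cov (run n)" "e \<notin> newly_covered (run n)"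
    using Suc.prems(2) by (simp_all add: mw_step_simps)
  have v: "v \<in> V" "v \<notin> trm (run n)"
    using Suc.IH[OF Suc.prems(1) uncov(1) Suc.prems(3)] Suc.prems edge_subset by auto
  have "e \<in> Ep (run n) v"
    using Ep_active[OF v] uncov Suc.prems by (auto simp: Einc_def)
  then have "v \<notin> joins (run n)" and "e \<in> Ep_next (run n) v"
    using uncov Suc.prems(1) v by (auto simp: newly_covered_def Ep_next_def)
  then show ?case using v by (auto simp: mw_step_simps trm_next_def)
qed

lemma all_covered_imp_all_terminated:
  assumes "cov (run n) = E" shows "trm (run n) = V"
proof (rule ccontr)
  assume "trm (run n) \<noteq> V"
  then obtain v where "v \<in> V" "v \<notin> trm (run n)" using trm_subset_V by blast
  then show False
    using Ep_active Ep_active_nonempty assms by (fastforce simp: Einc_def)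
qed

definition dual_sum :: "nat \<Rightarrow> 'v \<Rightarrow> real" where
  "dual_sum n v = (\<Sum>e\<in>Einc E v. dlt (run n) e)"

definition stuck_rounds :: "nat \<Rightarrow> 'v \<Rightarrow> real" where
  "stuck_rounds n v = (\<Sum>i<n. of_bool (v \<notin> trm (run (Suc i)) \<and> stuck (run i) v))"

lemma dual_sum_nonneg: "0 \<le> dual_sum n v"
  unfolding dual_sum_def using deal_dlt_nonneg Einc_subset by (intro sum_nonneg) blast

lemma dlt_increment_ge_deal:
  "e \<in> E \<Longrightarrow> e \<notin> cov (run (Suc n)) \<Longrightarrow> deal (run n) e \<le> dlt (run (Suc n)) e - dlt (run n) e"
  using deal_dlt_nonneg[of e n] alpha_gt_1 mult_right_mono[of 1 \<alpha> "deal (run n) e"]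
  by (auto simp: mw_step_simps)

lemma dlt_mono: "e \<in> E \<Longrightarrow> dlt (run n) e \<le> dlt (run (Suc n)) e"
  using deal_dlt_nonneg[of e "Suc n"] by (simp add: mw_step_simps(5))

lemma dual_sum_mono: "dual_sum n v \<le> dual_sum (Suc n) v"
  unfolding dual_sum_def using dlt_mono Einc_subset by (intro sum_mono) blast

lemma dual_sum_stuck_increase:
  assumes v: "v \<in> V" "v \<notin> trm (run (Suc n))" and "stuck (run n) v"
  shows "dual_sum n v + \<beta> / \<alpha> * w v \<le> dual_sum (Suc n) v"
proof -
  let ?incr = "\<lambda>e. dlt (run (Suc n)) e - dlt (run n) e"
  have pending: "Ep_next (run n) v = {e \<in> Einc E v. e \<notin> cov (run (Suc n))}"
    using Ep_active[OF v] by (simp add: mw_step_simps)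
  have "\<beta> / \<alpha> * w v < (\<Sum>e\<in>Ep_next (run n) v. deal (run n) e)"
    using assms(3) by (simp add: stuck_def)
  also have "\<dots> \<le> (\<Sum>e\<in>Ep_next (run n) v. ?incr e)"
    using dlt_increment_ge_deal by (intro sum_mono) (auto simp: pending Einc_def)
  also have "\<dots> \<le> (\<Sum>e\<in>Einc E v. ?incr e)"
    using finite_Einc dlt_mono by (intro sum_mono2) (auto simp: pending Einc_def)
  also have "\<dots> = dual_sum (Suc n) v - dual_sum n v"
    by (simp add: dual_sum_def sum_subtractf)
  finally show ?thesis by simp
qed

lemma dual_sum_ge_stuck_rounds:
  "v \<in> V \<Longrightarrow> \<beta> / \<alpha> * w v * stuck_rounds n v \<le> dual_sum n v"
proof (induction n)
  case 0 then show ?case using dual_sum_nonneg by (simp add: stuck_rounds_def)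
next
  case (Suc n)
  show ?case
  proof (cases "v \<notin> trm (run (Suc n)) \<and> stuck (run n) v")
    case True
    then have "stuck_rounds (Suc n) v = stuck_rounds n v + 1"
      by (simp add: stuck_rounds_def)
    moreover have "dual_sum n v + \<beta> / \<alpha> * w v \<le> dual_sum (Suc n) v"
      using dual_sum_stuck_increase Suc.prems True by blast
    ultimately show ?thesis using Suc by (simp add: distrib_left)
  next
    case False
    then have "stuck_rounds (Suc n) v = stuck_rounds n v"
      by (auto simp: stuck_rounds_def)
    then show ?thesis using Suc dual_sum_mono[of n v] by simp
  qed
qed

lemma stuck_rounds_le: "v \<in> V \<Longrightarrow> stuck_rounds n v \<le> \<alpha> / \<beta>"
proof (induction n)
  case 0 then show ?case using alpha_gt_1 beta_pos by (simp add: stuck_rounds_def)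
next
  case (Suc n)
  show ?case
  proof (cases "v \<in> trm (run (Suc n))")
    case True
    then show ?thesis using Suc by (simp add: stuck_rounds_def)
  next
    case False
    then have "v \<notin> trm (run n)" "v \<notin> joins (run n)"
      by (auto simp: mw_step_simps trm_next_def)
    then have below: "dual_sum n v < (1 - \<beta>) * w v"
      using Suc.prems by (auto simp: joins_def dual_sum_def)
    then have "0 < w v"
      using dual_sum_nonneg[of n v] weight_nonneg[OF Suc.prems] by (cases "w v = 0") auto
    moreover have "\<beta> / \<alpha> * stuck_rounds n v * w v < (1 - \<beta>) * w v"
      using dual_sum_ge_stuck_rounds[OF Suc.prems, of n] below by (simp add: ac_simps)
    ultimately have "\<beta> / \<alpha> * stuck_rounds n v < 1 - \<beta>"
      by (simp only: mult_less_cancel_right_pos)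
    then have "stuck_rounds n v < (1 - \<beta>) * \<alpha> / \<beta>"
      using beta_pos alpha_gt_1 by (simp add: field_simps)
    moreover have "(1 - \<beta>) * \<alpha> / \<beta> + 1 \<le> \<alpha> / \<beta>"
      using beta_pos alpha_gt_1 by (simp add: field_simps)
    moreover have "stuck_rounds (Suc n) v \<le> stuck_rounds n v + 1"
      by (simp add: stuck_rounds_def)
    ultimately show ?thesis by linarith
  qed
qed

definition raise_rounds :: "nat \<Rightarrow> 'v set \<Rightarrow> nat" where
  "raise_rounds n e = (\<Sum>i<n. of_bool (\<not> got_stuck (run i) e))"

lemma deal_init_le:
  assumes "e \<in> E" "v \<in> e" shows "deal (run 0) e \<le> \<beta> * w v"
proof -
  have "Min ((\<lambda>v. w v / real (card (Einc E v))) ` e) \<le> w v / real (card (Einc E v))"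
    using assms finite_edge by (intro Min_le) auto
  also have "\<dots> \<le> w v"
  proof -
    have "0 \<le> w v" "1 \<le> real (card (Einc E v))"
      using weight_nonneg edge_subset card_Einc_pos[OF assms] assms by auto
    then show ?thesis by (simp add: divide_le_eq mult_le_cancel_left1)
  qed
  finally show ?thesis using beta_pos by (simp add: mw_init_simps)
qed

lemma deal_Suc_uncovered:
  "e \<in> E \<Longrightarrow> e \<notin> cov (run (Suc n)) \<Longrightarrow>
    deal (run (Suc n)) e = (if got_stuck (run n) e then deal (run n) e else \<alpha> * deal (run n) e)"
  by (simp add: mw_step_simps)

lemma raised_deal_le:
  assumes e: "e \<in> E" "e \<notin> cov (run (Suc n))" and raised: "\<not> got_stuck (run n) e"
    and "v \<in> e"
  shows "\<alpha> * deal (run n) e \<le> \<beta> * w v"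
proof -
  have v: "v \<in> V" "v \<notin> trm (run (Suc n))"
    using uncovered_edge_vertex_active[OF e \<open>v \<in> e\<close>] edge_subset e \<open>v \<in> e\<close> by auto
  have pending: "Ep_next (run n) v = {e \<in> Einc E v. e \<notin> cov (run (Suc n))}"
    using Ep_active[OF v] by (simp add: mw_step_simps)
  then have "e \<in> Ep_next (run n) v"
    using e \<open>v \<in> e\<close> by (simp add: Einc_def)
  then have "\<not> stuck (run n) v"
    using raised v by (auto simp: got_stuck_def mw_step_simps)
  have "deal (run n) e \<le> (\<Sum>e\<in>Ep_next (run n) v. deal (run n) e)"
    using \<open>e \<in> Ep_next (run n) v\<close> finite_E deal_dlt_nonneg
    by (intro member_le_sum) (auto simp: pending Einc_def)
  also have "\<dots> \<le> \<beta> / \<alpha> * w v"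
    using \<open>\<not> stuck (run n) v\<close> by (simp add: stuck_def)
  finally show ?thesis using alpha_gt_1 by (simp add: field_simps)
qed

lemma deal_uncovered_le:
  "e \<in> E \<Longrightarrow> e \<notin> cov (run n) \<Longrightarrow> v \<in> e \<Longrightarrow> deal (run n) e \<le> \<beta> * w v"
proof (induction n)
  case 0 then show ?case using deal_init_le by simp
next
  case (Suc n)
  then have "e \<notin> cov (run n)" by (simp add: mw_step_simps)
  with Suc show ?case
    using deal_Suc_uncovered raised_deal_le by (cases "got_stuck (run n) e") auto
qed

lemma deal_uncovered_eq:
  "e \<in> E \<Longrightarrow> e \<notin> cov (run n) \<Longrightarrow> deal (run n) e = \<alpha> ^ raise_rounds n e * deal (run 0) e"
proof (induction n)
  case 0 then show ?case by (simp add: raise_rounds_def)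
next
  case (Suc n)
  then have "e \<notin> cov (run n)" by (simp add: mw_step_simps)
  with Suc show ?case
    using deal_Suc_uncovered by (simp add: raise_rounds_def)
qed

lemma zero_weight_covered:
  assumes "e \<in> E" "u \<in> e" "w u = 0" shows "e \<in> cov (run 1)"
proof -
  have "e \<in> Einc E u" using assms by (simp add: Einc_def)
  moreover have "u \<in> V" using assms edge_subset by auto
  ultimately have "u \<in> joins (run 0)"
    using dual_sum_nonneg[of 0 u] assms(3) by (auto simp: joins_def dual_sum_def mw_init_simps)
  with \<open>e \<in> Einc E u\<close> have "e \<in> newly_covered (run 0)"
    using assms(1) by (auto simp: newly_covered_def mw_init_simps)
  then show ?thesis by (simp add: mw_step_simps)
qed

lemma raise_rounds_le_log:
  assumes e: "e \<in> E" "e \<notin> cov (run n)"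
  shows "real (raise_rounds n e) \<le> log \<alpha> (Delta V E)"
proof -
  have "Min ((\<lambda>v. w v / real (card (Einc E v))) ` e) \<in> (\<lambda>v. w v / real (card (Einc E v))) ` e"
    using finite_edge edge_nonempty e by (intro Min_in) auto
  then obtain u where "u \<in> e"
    and u_min: "Min ((\<lambda>v. w v / real (card (Einc E v))) ` e) = w u / real (card (Einc E u))"
    by auto
  have "u \<in> V" using \<open>u \<in> e\<close> edge_subset e by auto
  have deg: "0 < card (Einc E u)" "card (Einc E u) \<le> Delta V E"
    using card_Einc_pos[OF e(1) \<open>u \<in> e\<close>] card_Einc_le_Delta[OF \<open>u \<in> V\<close>] by auto
  show ?thesis
  proof (cases n)
    case 0 then show ?thesis using deg alpha_gt_1 by (simp add: raise_rounds_def)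
  next
    case (Suc m)
    have "0 < w u"
      using zero_weight_covered[OF e(1) \<open>u \<in> e\<close>] cov_mono[of 1 n] e Suc
        weight_nonneg[OF \<open>u \<in> V\<close>] by fastforce
    have "\<alpha> ^ raise_rounds n e * (\<beta> * (w u / card (Einc E u))) \<le> \<beta> * w u"
      using deal_uncovered_eq[OF e] deal_uncovered_le[OF e \<open>u \<in> e\<close>] u_min
      by (simp add: mw_init_simps)
    then have "\<alpha> ^ raise_rounds n e \<le> card (Einc E u)"
      using \<open>0 < w u\<close> beta_pos deg by (simp add: field_simps)
    also have "\<dots> \<le> Delta V E" using deg by simp
    finally show ?thesis
      using alpha_gt_1 deg by (simp add: le_log_iff powr_realpow)
  qed
qed

lemma got_stuck_le_sum_stuck:
  assumes "e \<in> E"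
  shows "of_bool (got_stuck (run i) e) \<le> (\<Sum>v\<in>e. of_bool (v \<notin> trm (run (Suc i)) \<and> stuck (run i) v) :: real)"
proof (cases "got_stuck (run i) e")
  case True
  then obtain v where v: "v \<in> V" "v \<notin> trm (run (Suc i))" "e \<in> Ep (run (Suc i)) v"
    and "stuck (run i) v"
    by (auto simp: got_stuck_def mw_step_simps)
  then have "v \<in> e" using Ep_active[OF v(1,2)] by (simp add: Einc_def)
  then have "of_bool (got_stuck (run i) e)
      = (of_bool (v \<notin> trm (run (Suc i)) \<and> stuck (run i) v) :: real)"
    using True v \<open>stuck (run i) v\<close> by simp
  also have "\<dots> \<le> (\<Sum>v\<in>e. of_bool (v \<notin> trm (run (Suc i)) \<and> stuck (run i) v))"
    using \<open>v \<in> e\<close> finite_edge[OF assms] by (intro member_le_sum) auto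
  finally show ?thesis .
qed (simp add: sum_nonneg)

lemma uncovered_edge_iterations_le:
  assumes e: "e \<in> E" "e \<notin> cov (run n)"
  shows "real n \<le> log \<alpha> (Delta V E) + card e * \<alpha> / \<beta>"
proof -
  have "real n = real (raise_rounds n e) + (\<Sum>i<n. of_bool (got_stuck (run i) e))"
    unfolding raise_rounds_def by (induction n) auto
  also have "(\<Sum>i<n. of_bool (got_stuck (run i) e)) \<le>
      (\<Sum>i<n. \<Sum>v\<in>e. of_bool (v \<notin> trm (run (Suc i)) \<and> stuck (run i) v) :: real)"
    by (intro sum_mono got_stuck_le_sum_stuck[OF e(1)])
  also have "\<dots> = (\<Sum>v\<in>e. stuck_rounds n v)"
    unfolding stuck_rounds_def by (rule sum.swap)
  also have "\<dots> \<le> (\<Sum>v\<in>e. \<alpha> / \<beta>)"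
    using stuck_rounds_le edge_subset e by (intro sum_mono) auto
  finally show ?thesis
    using raise_rounds_le_log[OF e] by simp
qed

lemma all_terminated_after:
  assumes rank: "\<forall>e\<in>E. card e \<le> f"
    and n: "log \<alpha> (Delta V E) + real f * \<alpha> / \<beta> < real n"
  shows "mw_all_terminated V E w \<beta> \<alpha> n"
proof -
  have "cov (run n) = E"
  proof (rule ccontr)
    assume "cov (run n) \<noteq> E"
    then obtain e where e: "e \<in> E" "e \<notin> cov (run n)" using cov_subset_E by blast
    have "card e * \<alpha> / \<beta> \<le> real f * \<alpha> / \<beta>"
      using rank e alpha_gt_1 beta_pos by (intro divide_right_mono mult_right_mono) auto
    then show False using uncovered_edge_iterations_le[OF e] n by linarith
  qed
  then show ?thesis
    using all_covered_imp_all_terminated by (simp add: mw_all_terminated_def)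
qed

lemma log_Delta_nonneg: "0 \<le> log \<alpha> (Delta V E)"
  using alpha_gt_1 by (cases "Delta V E = 0") (simp_all add: log_def)

lemma mw_iterations_le:
  assumes rank: "\<forall>e\<in>E. card e \<le> f"
  shows "mw_all_terminated V E w \<beta> \<alpha> (nat \<lfloor>log \<alpha> (Delta V E) + real f * \<alpha> / \<beta>\<rfloor> + 1)"
    and "real (mw_iterations V E w \<beta> \<alpha>) \<le> log \<alpha> (Delta V E) + real f * \<alpha> / \<beta> + 1"
proof -
  define L where "L = log \<alpha> (Delta V E) + real f * \<alpha> / \<beta>"
  have "0 \<le> L"
    using log_Delta_nonneg alpha_gt_1 beta_pos by (simp add: L_def)
  then have N: "real (nat \<lfloor>L\<rfloor> + 1) = of_int \<lfloor>L\<rfloor> + 1" by simp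
  have "L < real (nat \<lfloor>L\<rfloor> + 1)"
    using N real_of_int_floor_add_one_gt[of L] by linarith
  then show terminated: "mw_all_terminated V E w \<beta> \<alpha> (nat \<lfloor>L\<rfloor> + 1)"
    using all_terminated_after[OF rank] by (simp add: L_def)
  have "mw_iterations V E w \<beta> \<alpha> \<le> nat \<lfloor>L\<rfloor> + 1"
    unfolding mw_iterations_def using terminated by (rule Least_le)
  then show "real (mw_iterations V E w \<beta> \<alpha>) \<le> L + 1"
    using N of_int_floor_le[of L] by linarith
qed

lemma mw_iterations_no_edges: "E = {} \<Longrightarrow> mw_iterations V E w \<beta> \<alpha> = 0"
  using all_covered_imp_all_terminated[of 0] mw_init_simps(1)
  by (simp add: mw_iterations_def mw_all_terminated_def)

end

theorem mainTheorem6: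
  "\<exists>c::real. c > 0 \<and>
    (\<forall>(V::'v set) (E::'v set set) (f::nat) (w::'v \<Rightarrow> real) (\<epsilon>::real) (\<alpha>::real).
      finite V \<and> finite E \<and> (\<forall>e\<in>E. e \<noteq> {} \<and> e \<subseteq> V \<and> card e \<le> f) \<and>
      (\<forall>v\<in>V. w v \<ge> 0) \<and> Delta V E \<ge> 3 \<and> 0 < \<epsilon> \<and> \<epsilon> \<le> 1 \<and> \<alpha> > 1
      \<longrightarrow> (let \<beta> = \<epsilon> / (real f + \<epsilon>) in
            (\<exists>i. mw_all_terminated V E w \<beta> \<alpha> i) \<and>
            real (mw_iterations V E w \<beta> \<alpha>)
              \<le> c * (log \<alpha> (real (Delta V E)) + real f * \<alpha> / \<beta>)))"
proof (intro exI[of _ 2] conjI allI impI)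
  fix V :: "'v set" and E :: "'v set set" and f :: nat and w :: "'v \<Rightarrow> real"
    and \<epsilon> \<alpha> :: real
  assume H: "finite V \<and> finite E \<and> (\<forall>e\<in>E. e \<noteq> {} \<and> e \<subseteq> V \<and> card e \<le> f) \<and>
      (\<forall>v\<in>V. w v \<ge> 0) \<and> Delta V E \<ge> 3 \<and> 0 < \<epsilon> \<and> \<epsilon> \<le> 1 \<and> \<alpha> > 1"
  define \<beta> where "\<beta> = \<epsilon> / (real f + \<epsilon>)"
  have \<beta>: "0 < \<beta>" "\<beta> \<le> 1" using H by (simp_all add: \<beta>_def)
  interpret mwhvc V E w \<beta> \<alpha> using H \<beta> by unfold_locales auto
  have rank: "\<forall>e\<in>E. card e \<le> f" using H by blast
  have "real (mw_iterations V E w \<beta> \<alpha>) \<le> 2 * (log \<alpha> (Delta V E) + real f * \<alpha> / \<beta>)"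
  proof (cases "E = {}")
    case True
    then show ?thesis using mw_iterations_no_edges log_Delta_nonneg \<beta> H by simp
  next
    case False
    then obtain e where "e \<in> E" by blast
    then have "1 \<le> f" using rank finite_edge edge_nonempty
      by (metis card_gt_0_iff le_trans less_one not_le)
    then have "\<beta> \<le> real f * \<alpha>" using \<beta> H mult_mono[of 1 "real f" 1 \<alpha>] by simp
    then have "1 \<le> real f * \<alpha> / \<beta>" using \<beta> by simp
    moreover note mw_iterations_le(2)[OF rank] log_Delta_nonneg
    ultimately show ?thesis by argo
  qed
  then show "let \<beta> = \<epsilon> / (real f + \<epsilon>) in (\<exists>i. mw_all_terminated V E w \<beta> \<alpha> i) \<and>
      real (mw_iterations V E w \<beta> \<alpha>) \<le> 2 * (log \<alpha> (real (Delta V E)) + real f * \<alpha> / \<beta>)"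
    using mw_iterations_le(1)[OF rank] by (auto simp: Let_def \<beta>_def[symmetric])
qed simp

end
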